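(* Let $M,K\in\mathbb{N}$ with $M,K>2$ and $|M-K|>2$. If $\{(M+1,0),(M,0),(0,K+1),(0,K)\}\subset\mathcal{Z}_0$, then $S_\infty=\mathbb{L}^2$.
   Context: $\mathbb{L}^2=\{w\in L^2([0,2\pi]^2_{\mathrm{per}};\mathbb{R}):\int w\,dx=0\}$. $\mathbb{Z}^2_+=\{(j_1,j_2)\in\mathbb{Z}^2:j_2>0\}\cup\{(j_1,0):j_1>0\}$, $\mathbb{Z}^2_-=-\mathbb{Z}^2_+$, $\mathbb{Z}^2_0=\mathbb{Z}^2_+\cup\mathbb{Z}^2_-$; $e_k(x)=\sin(k\cdot x)$ for $k\in\mathbb{Z}^2_+$, $e_k(x)=\cos(k\cdot x)$ for $k\in\mathbb{Z}^2_-$. Given a finite set $\mathcal{Z}_*\subset\mathbb{Z}^2_0$, define $\mathcal{Z}_0=\mathcal{Z}_*\cap(-\mathcal{Z}_* )$, for $n\ge1$ $\mathcal{Z}_n=\{\ell+j\in\mathbb{Z}^2_0: j\in\mathcal{Z}_0,\ \ell\in\mathcal{Z}_{n-1},\ \ell^\perp\cdot j\neq0,\ |j|\neq|\ell|\}$ where $\ell^\perp=(-\ell_2,\ell_1)$ and $|\cdot|$ is the Euclidean norm, $\mathcal{Z}_\infty=\bigcup_{n\ge1}\mathcal{Z}_n$, and $S_\infty$ the closed linear span in $\mathbb{L}^2$ of $\{e_k:k\in\mathcal{Z}_\infty\cup\mathcal{Z}_*\}$. *)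

theory Defs
  imports "HOL-Analysis.Analysis"
begin

text \<open>Lattice points are pairs of integers; points of the torus are pairs of reals
  in the fundamental domain [0,2pi]^2.\<close>

definition Zplus :: "(int \<times> int) set" where
  "Zplus = {(j1, j2). j2 > 0} \<union> {(j1, j2). j2 = 0 \<and> j1 > 0}"

definition Zminus :: "(int \<times> int) set" where
  "Zminus = uminus ` Zplus"

definition Zzero :: "(int \<times> int) set" where
  "Zzero = Zplus \<union> Zminus"

definition kdot :: "int \<times> int \<Rightarrow> real \<times> real \<Rightarrow> real" where
  "kdot k x = real_of_int (fst k) * fst x + real_of_int (snd k) * snd x"

definition ebasis :: "int \<times> int \<Rightarrow> real \<times> real \<Rightarrow> real" where
  "ebasis k x = (if k \<in> Zplus then sin (kdot k x) else cos (kdot k x))"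

text \<open>perp l . j where perp l = (-l2, l1)\<close>
definition perpdot :: "int \<times> int \<Rightarrow> int \<times> int \<Rightarrow> int" where
  "perpdot l j = - snd l * fst j + fst l * snd j"

text \<open>squared Euclidean norm (|j| \<noteq> |l| iff squared norms differ)\<close>
definition nsq :: "int \<times> int \<Rightarrow> int" where
  "nsq j = fst j ^ 2 + snd j ^ 2"

fun Zset :: "(int \<times> int) set \<Rightarrow> nat \<Rightarrow> (int \<times> int) set" where
  "Zset Zs 0 = Zs \<inter> uminus ` Zs"
| "Zset Zs (Suc n) = {l + j | l j. j \<in> Zset Zs 0 \<and> l \<in> Zset Zs n \<and>
      perpdot l j \<noteq> 0 \<and> nsq j \<noteq> nsq l \<and> l + j \<in> Zzero}"

definition Zinf :: "(int \<times> int) set \<Rightarrow> (int \<times> int) set" where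
  "Zinf Zs = (\<Union>n\<in>{1..}. Zset Zs n)"

definition Tbox :: "(real \<times> real) set" where
  "Tbox = {0..2*pi} \<times> {0..2*pi}"

text \<open>The space L^2 (mean zero, real valued) on the torus, as a set of representatives.\<close>
definition L2 :: "(real \<times> real \<Rightarrow> real) \<Rightarrow> bool" where
  "L2 f \<longleftrightarrow> f \<in> borel_measurable (lebesgue_on Tbox)
      \<and> integrable (lebesgue_on Tbox) (\<lambda>x. (f x)^2)
      \<and> integral\<^sup>L (lebesgue_on Tbox) f = 0"

definition closed_span :: "(int \<times> int) set \<Rightarrow> (real \<times> real \<Rightarrow> real) \<Rightarrow> bool" where
  "closed_span A f \<longleftrightarrow> L2 f \<and> (\<forall>\<epsilon>>0. \<exists>F c. finite F \<and> F \<subseteq> A \<and>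
      integral\<^sup>L (lebesgue_on Tbox) (\<lambda>x. (f x - (\<Sum>k\<in>F. c k * ebasis k x))^2) < \<epsilon>)"

definition S_inf :: "(int \<times> int) set \<Rightarrow> (real \<times> real \<Rightarrow> real) set" where
  "S_inf Zs = {f. closed_span (Zinf Zs \<union> Zs) f}"

end

theory Submission
  imports Defs
begin

text \<open>
  Combinatorics: from a point \<open>(x, y)\<close> with \<open>y \<noteq> 0\<close> one may add \<open>\<plusminus>(M, 0)\<close> or \<open>\<plusminus>(M + 1, 0)\<close>
  except when \<open>|(x, y)|\<close> equals \<open>M\<close>, resp. \<open>M + 1\<close>, so at most one of the two step lengths
  is ever blocked. Since \<open>(M + 1) - M = 1\<close>, walking along a row reaches every point of it, and
  likewise along columns with \<open>K, K + 1\<close>. Starting from \<open>(M, K) \<in> Z\<^sub>1\<close> this gives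
  \<open>Z\<^sub>\<infinity> = \<int>\<^sup>2 - {0}\<close>.

  Analysis: it remains to show that the \<open>e\<^sub>k\<close>, \<open>k \<noteq> 0\<close>, span a dense subspace of the mean-zero
  part of \<open>L\<^sup>2\<close> of the square. Truncate \<open>f\<close>, approximate the truncation in \<open>L\<^sup>2\<close> by a continuous
  function vanishing on the boundary of the square, view that as a continuous function on the
  torus and apply Stone-Weierstrass to get a trigonometric polynomial \<open>c\<^sub>0 + h\<close>. Since both
  \<open>f\<close> and \<open>h\<close> have mean zero, dropping the constant \<open>c\<^sub>0\<close> does not increase the error.
\<close>

section \<open>Reaching every lattice point\<close>

lemma Zzero_iff: "p \<in> Zzero \<longleftrightarrow> p \<noteq> 0"
proof -
  have "q \<in> uminus ` A \<longleftrightarrow> - q \<in> A" for q :: "int \<times> int" and A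
    by (metis image_iff minus_minus)
  then show ?thesis
    by (cases p) (auto simp: Zzero_def Zminus_def Zplus_def zero_prod_def)
qed

lemma Zset_zero_uminus: "j \<in> Zset Zs 0 \<Longrightarrow> - j \<in> Zset Zs 0"
  by (auto simp: image_iff)

lemma Zinf_subset_Zzero: "Zinf Zs \<subseteq> Zzero"
proof
  fix p assume "p \<in> Zinf Zs"
  then obtain n where "1 \<le> n" "p \<in> Zset Zs n" by (auto simp: Zinf_def)
  then show "p \<in> Zzero" by (cases n) auto
qed

lemma Zinf_add:
  assumes "l \<in> Zset Zs 0 \<union> Zinf Zs" "j \<in> Zset Zs 0"
    and "perpdot l j \<noteq> 0" "nsq j \<noteq> nsq l" "l + j \<noteq> 0"
  shows "l + j \<in> Zinf Zs"
proof -
  obtain n where n: "l \<in> Zset Zs n" using assms(1) unfolding Zinf_def by blast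
  have "l + j \<in> Zzero" using assms(5) Zzero_iff by blast
  then have "l + j \<in> Zset Zs (Suc n)"
    unfolding Zset.simps(2) using n assms(2-4) by blast
  then show ?thesis by (auto simp: Zinf_def simp del: Zset.simps)
qed

text \<open>\<open>Q\<close> is a row \<open>{x. (x, y) \<in> Z\<^sub>\<infinity>}\<close> with \<open>c = y\<^sup>2\<close>: a step of length \<open>a\<close> is allowed unless
  \<open>|(x, y)| = a\<close>.\<close>
locale int_walk =
  fixes Q :: "int \<Rightarrow> bool" and m c :: int
  assumes m_pos: "m > 0" and c_pos: "c > 0"
    and step: "\<And>x a. Q x \<Longrightarrow> a \<in> {m, m + 1} \<Longrightarrow> x\<^sup>2 + c \<noteq> a\<^sup>2 \<Longrightarrow> Q (x + a) \<and> Q (x - a)"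
begin

lemma exists_greater:
  assumes "Q x" shows "\<exists>y > x. Q y"
proof (cases "x\<^sup>2 + c = m\<^sup>2")
  case True
  have "(m + 1)\<^sup>2 = m\<^sup>2 + (2 * m + 1)" by (simp add: power2_eq_square algebra_simps)
  then have "x\<^sup>2 + c \<noteq> (m + 1)\<^sup>2" using True m_pos by linarith
  then have "Q (x + (m + 1))" using step[OF assms, of "m + 1"] by simp
  then show ?thesis using m_pos by (intro exI[of _ "x + (m + 1)"]) simp
next
  case False
  then have "Q (x + m)" using step[OF assms, of m] by simp
  then show ?thesis using m_pos by (intro exI[of _ "x + m"]) simp
qed

lemma exists_ge:
  assumes "Q x" shows "\<exists>y \<ge> b. Q y"
proof -
  have "\<exists>y \<ge> x + int n. Q y" for n
  proof (induction n)
    case 0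
    then show ?case using assms by auto
  next
    case (Suc n)
    then obtain y where "y \<ge> x + int n" "Q y" by blast
    then obtain z where "z > y" "Q z" using exists_greater by blast
    with \<open>y \<ge> x + int n\<close> show ?case by (intro exI[of _ z]) simp
  qed
  from this[of "nat (b - x)"] obtain y where "y \<ge> x + int (nat (b - x))" "Q y" by blast
  moreover have "b \<le> x + int (nat (b - x))" by (simp add: int_nat_eq)
  ultimately show ?thesis by (intro exI[of _ y]) simp
qed

text \<open>Above \<open>m + 1\<close> neither step is obstructed, and \<open>(m + 1) - m = 1\<close>.\<close>
lemma step_one_above:
  assumes "Q y" "m + 1 \<le> y" shows "Q (y + 1)"
proof -
  have "(m + 1)\<^sup>2 \<le> y\<^sup>2" using assms(2) m_pos by (intro power_mono) auto
  then have "Q (y + (m + 1))" using step[OF assms(1), of "m + 1"] c_pos by auto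
  moreover have "m\<^sup>2 \<le> (y + (m + 1))\<^sup>2" using assms(2) m_pos by (intro power_mono) auto
  ultimately have "Q (y + (m + 1) - m)" using step[of "y + (m + 1)" m] c_pos by auto
  then show ?thesis by (simp add: algebra_simps)
qed

text \<open>The two downward steps are obstructed simultaneously only if \<open>y = 0\<close> and \<open>c = 0\<close>.\<close>
lemma from_two_above:
  assumes "Q (y + m)" "Q (y + (m + 1))" shows "Q y"
proof (cases "(y + m)\<^sup>2 + c = m\<^sup>2")
  case True
  have "(y + (m + 1))\<^sup>2 = (y + m)\<^sup>2 + 2 * y + (2 * m + 1)" "(m + 1)\<^sup>2 = m\<^sup>2 + (2 * m + 1)"
    by (simp_all add: power2_eq_square algebra_simps)
  moreover have "y \<noteq> 0" using True c_pos by auto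
  ultimately have "(y + (m + 1))\<^sup>2 + c \<noteq> (m + 1)\<^sup>2" using True by linarith
  then have "Q (y + (m + 1) - (m + 1))" using step[OF assms(2), of "m + 1"] by simp
  then show ?thesis by simp
next
  case False
  then have "Q (y + m - m)" using step[OF assms(1), of m] by simp
  then show ?thesis by simp
qed

lemma everywhere:
  assumes "Q x0" shows "Q x"
proof -
  obtain y0 where y0: "Q y0" "m + 1 \<le> y0" using exists_ge[OF assms] by blast
  have above: "Q y" if "y0 \<le> y" for y
    using that
  proof (induction y rule: int_ge_induct)
    case base
    then show ?case by (rule y0(1))
  next
    case (step i)
    then show ?case using step_one_above y0(2) by simp
  qed
  have "\<forall>y \<ge> y0 - int n. Q y" for n
  proof (induction n)
    case 0
    then show ?case using above by simp
  next
    case (Suc n)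
    show ?case
    proof (intro allI impI)
      fix y assume "y0 - int (Suc n) \<le> y"
      then have "y0 - int n \<le> y + m" "y0 - int n \<le> y + (m + 1)" using m_pos by auto
      then show "Q y" using Suc from_two_above by blast
    qed
  qed
  from this[of "nat (y0 - x)"] show "Q x" by simp
qed

end

lemma Zinf_eq_Zzero:
  fixes M K :: int
  assumes "0 < M" "0 < K" "M \<noteq> K"
    and Z0: "{(M + 1, 0), (M, 0), (0, K + 1), (0, K)} \<subseteq> Zset Zs 0"
  shows "Zinf Zs = Zzero"
proof
  show "Zinf Zs \<subseteq> Zzero" by (rule Zinf_subset_Zzero)
  have row: "(x, y) \<in> Zinf Zs" if "y \<noteq> 0" "(x0, y) \<in> Zinf Zs" for x x0 y
  proof -
    interpret int_walk "\<lambda>x. (x, y) \<in> Zinf Zs" M "y\<^sup>2"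
    proof
      fix x a assume "(x, y) \<in> Zinf Zs" "a \<in> {M, M + 1}" "x\<^sup>2 + y\<^sup>2 \<noteq> a\<^sup>2"
      moreover have "(a, 0) \<in> Zset Zs 0" "(- a, 0) \<in> Zset Zs 0"
        using Z0 Zset_zero_uminus[of "(a, 0)"] \<open>a \<in> {M, M + 1}\<close> by auto
      ultimately show "(x + a, y) \<in> Zinf Zs \<and> (x - a, y) \<in> Zinf Zs"
        using Zinf_add[of "(x, y)" Zs "(a, 0)"] Zinf_add[of "(x, y)" Zs "(- a, 0)"] \<open>y \<noteq> 0\<close> \<open>0 < M\<close>
        by (auto simp: perpdot_def nsq_def zero_prod_def)
    qed (use assms that in auto)
    show ?thesis using everywhere that by blast
  qed
  have col: "(x, y) \<in> Zinf Zs" if "x \<noteq> 0" "(x, y0) \<in> Zinf Zs" for x y y0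
  proof -
    interpret int_walk "\<lambda>y. (x, y) \<in> Zinf Zs" K "x\<^sup>2"
    proof
      fix y a assume "(x, y) \<in> Zinf Zs" "a \<in> {K, K + 1}" "y\<^sup>2 + x\<^sup>2 \<noteq> a\<^sup>2"
      moreover have "(0, a) \<in> Zset Zs 0" "(0, - a) \<in> Zset Zs 0"
        using Z0 Zset_zero_uminus[of "(0, a)"] \<open>a \<in> {K, K + 1}\<close> by auto
      ultimately show "(x, y + a) \<in> Zinf Zs \<and> (x, y - a) \<in> Zinf Zs"
        using Zinf_add[of "(x, y)" Zs "(0, a)"] Zinf_add[of "(x, y)" Zs "(0, - a)"] \<open>x \<noteq> 0\<close> \<open>0 < K\<close>
        by (auto simp: perpdot_def nsq_def zero_prod_def add.commute)
    qed (use assms that in auto)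
    show ?thesis using everywhere that by blast
  qed
  have "K\<^sup>2 \<noteq> M\<^sup>2" using assms(1-3) by (auto simp: power2_eq_iff)
  then have "(M, 0) + (0, K) \<in> Zinf Zs"
    using Z0 assms(1,2) by (intro Zinf_add) (auto simp: perpdot_def nsq_def zero_prod_def)
  then have "(x, y) \<in> Zinf Zs" if "x \<noteq> 0" for x y
    using row[of K M x] col[of x K y] that assms(2) by simp
  then show "Zzero \<subseteq> Zinf Zs"
    using row[of _ 1] by (auto simp: Zzero_iff zero_prod_def)
qed

section \<open>Trigonometric polynomials\<close>

lemma kdot_add: "kdot (k + l) x = kdot k x + kdot l x"
  and kdot_diff: "kdot (k - l) x = kdot k x - kdot l x"
  and kdot_uminus: "kdot (- k) x = - kdot k x"
  and kdot_zero: "kdot 0 x = 0"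
  by (simp_all add: kdot_def algebra_simps)

lemma uminus_Zplus_iff: "k \<noteq> 0 \<Longrightarrow> - k \<in> Zplus \<longleftrightarrow> k \<notin> Zplus"
  by (cases k) (auto simp: Zplus_def zero_prod_def)

inductive trig_poly :: "(real \<times> real \<Rightarrow> real) \<Rightarrow> bool" where
  cos_kdot: "trig_poly (\<lambda>x. cos (kdot k x))"
| sin_kdot: "trig_poly (\<lambda>x. sin (kdot k x))"
| add: "trig_poly f \<Longrightarrow> trig_poly g \<Longrightarrow> trig_poly (\<lambda>x. f x + g x)"
| scale: "trig_poly f \<Longrightarrow> trig_poly (\<lambda>x. c * f x)"

lemma trig_poly_const: "trig_poly (\<lambda>x. c)"
  using trig_poly.scale[OF trig_poly.cos_kdot, of c 0] by (simp add: kdot_zero)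

lemma trig_poly_lincomb: "trig_poly f \<Longrightarrow> trig_poly g \<Longrightarrow> trig_poly (\<lambda>x. a * f x + b * g x)"
  by (intro trig_poly.add trig_poly.scale)

lemma trig_poly_mult_cos_sin:
  assumes "trig_poly g"
  shows "trig_poly (\<lambda>x. cos (kdot k x) * g x) \<and> trig_poly (\<lambda>x. sin (kdot k x) * g x)"
  using assms
proof induction
  case (cos_kdot l)
  have "trig_poly (\<lambda>x. 1/2 * cos (kdot (k - l) x) + 1/2 * cos (kdot (k + l) x))"
    "trig_poly (\<lambda>x. 1/2 * sin (kdot (k + l) x) + 1/2 * sin (kdot (k - l) x))"
    by (intro trig_poly_lincomb trig_poly.intros)+
  then show ?case by (simp add: cos_times_cos sin_times_cos kdot_add kdot_diff add_divide_distrib)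
next
  case (sin_kdot l)
  have "trig_poly (\<lambda>x. 1/2 * sin (kdot (k + l) x) + (- 1/2) * sin (kdot (k - l) x))"
    "trig_poly (\<lambda>x. 1/2 * cos (kdot (k - l) x) + (- 1/2) * cos (kdot (k + l) x))"
    by (intro trig_poly_lincomb trig_poly.intros)+
  then show ?case by (simp add: cos_times_sin sin_times_sin kdot_add kdot_diff diff_divide_distrib)
next
  case (add f g)
  then show ?case by (simp add: distrib_left trig_poly.add)
next
  case (scale f c)
  then show ?case by (simp add: mult.left_commute trig_poly.scale)
qed

lemma trig_poly_mult: "trig_poly f \<Longrightarrow> trig_poly g \<Longrightarrow> trig_poly (\<lambda>x. f x * g x)"
proof (induction rule: trig_poly.induct)
  case (add f1 f2)
  then show ?case by (simp add: distrib_right trig_poly.add)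
next
  case (scale f c)
  then show ?case by (simp add: mult.assoc trig_poly.scale)
qed (simp_all add: trig_poly_mult_cos_sin)

lemma continuous_on_trig_poly: "trig_poly f \<Longrightarrow> continuous_on S f"
  by (induction rule: trig_poly.induct) (auto simp: kdot_def intro!: continuous_intros)

definition ebasis_poly :: "(real \<times> real \<Rightarrow> real) \<Rightarrow> bool" where
  "ebasis_poly f \<longleftrightarrow>
    (\<exists>c0 F c. finite F \<and> F \<subseteq> Zzero \<and> f = (\<lambda>x. c0 + (\<Sum>k\<in>F. c k * ebasis k x)))"

lemma ebasis_poly_const: "ebasis_poly (\<lambda>x. c0)"
  unfolding ebasis_poly_def by (intro exI[of _ c0] exI[of _ "{}"]) auto

lemma ebasis_poly_ebasis: "k \<noteq> 0 \<Longrightarrow> ebasis_poly (\<lambda>x. a * ebasis k x)"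
  unfolding ebasis_poly_def
  by (intro exI[of _ 0] exI[of _ "{k}"] exI[of _ "\<lambda>_. a"]) (auto simp: Zzero_iff)

lemma ebasis_poly_add:
  assumes "ebasis_poly f" "ebasis_poly g"
  shows "ebasis_poly (\<lambda>x. f x + g x)"
proof -
  obtain c0 F c where F: "finite F" "F \<subseteq> Zzero" "f = (\<lambda>x. c0 + (\<Sum>k\<in>F. c k * ebasis k x))"
    using assms(1) unfolding ebasis_poly_def by blast
  obtain d0 G d where G: "finite G" "G \<subseteq> Zzero" "g = (\<lambda>x. d0 + (\<Sum>k\<in>G. d k * ebasis k x))"
    using assms(2) unfolding ebasis_poly_def by blast
  define e where "e k = (if k \<in> F then c k else 0) + (if k \<in> G then d k else 0)" for k
  have "e k * ebasis k x = (if k \<in> F then c k * ebasis k x else 0)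
      + (if k \<in> G then d k * ebasis k x else 0)" for k x
    by (simp add: e_def distrib_right)
  then have "(\<Sum>k\<in>F \<union> G. e k * ebasis k x) = (\<Sum>k\<in>F. c k * ebasis k x) + (\<Sum>k\<in>G. d k * ebasis k x)"
    for x
    using F(1) G(1) by (simp add: sum.distrib sum.inter_restrict[symmetric])
  then show ?thesis
    unfolding ebasis_poly_def using F G
    by (intro exI[of _ "c0 + d0"] exI[of _ "F \<union> G"] exI[of _ e]) auto
qed

lemma ebasis_poly_scale:
  assumes "ebasis_poly f" shows "ebasis_poly (\<lambda>x. a * f x)"
proof -
  obtain c0 F c where "finite F" "F \<subseteq> Zzero" "f = (\<lambda>x. c0 + (\<Sum>k\<in>F. c k * ebasis k x))"
    using assms unfolding ebasis_poly_def by blast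
  then show ?thesis
    unfolding ebasis_poly_def
    by (intro exI[of _ "a * c0"] exI[of _ F] exI[of _ "\<lambda>k. a * c k"])
       (auto simp: distrib_left sum_distrib_left mult.assoc)
qed

lemma trig_poly_imp_ebasis_poly: "trig_poly f \<Longrightarrow> ebasis_poly f"
proof (induction rule: trig_poly.induct)
  case (cos_kdot k)
  consider "k = 0" | "k \<noteq> 0" "k \<in> Zplus" | "k \<noteq> 0" "k \<notin> Zplus" by blast
  then show ?case
  proof cases
    case 1
    then show ?thesis using ebasis_poly_const[of 1] by (simp add: kdot_zero)
  next
    case 2
    then have "(\<lambda>x. cos (kdot k x)) = (\<lambda>x. 1 * ebasis (- k) x)"
      by (simp add: ebasis_def uminus_Zplus_iff kdot_uminus)
    then show ?thesis using ebasis_poly_ebasis[of "- k" 1] 2 by simp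
  next
    case 3
    then have "(\<lambda>x. cos (kdot k x)) = (\<lambda>x. 1 * ebasis k x)" by (simp add: ebasis_def)
    then show ?thesis using ebasis_poly_ebasis[of k 1] 3 by simp
  qed
next
  case (sin_kdot k)
  consider "k = 0" | "k \<noteq> 0" "k \<in> Zplus" | "k \<noteq> 0" "k \<notin> Zplus" by blast
  then show ?case
  proof cases
    case 1
    then show ?thesis using ebasis_poly_const[of 0] by (simp add: kdot_zero)
  next
    case 2
    then have "(\<lambda>x. sin (kdot k x)) = (\<lambda>x. 1 * ebasis k x)" by (simp add: ebasis_def)
    then show ?thesis using ebasis_poly_ebasis[of k 1] 2 by simp
  next
    case 3
    then have "(\<lambda>x. sin (kdot k x)) = (\<lambda>x. - 1 * ebasis (- k) x)"
      by (simp add: ebasis_def uminus_Zplus_iff kdot_uminus)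
    then show ?thesis using ebasis_poly_ebasis[of "- k" "- 1"] 3 by simp
  qed
qed (simp_all add: ebasis_poly_add ebasis_poly_scale)

section \<open>Integrals over the square\<close>

lemma Tbox_cbox: "Tbox = cbox (0, 0) (2 * pi, 2 * pi)"
  by (simp add: Tbox_def cbox_Pair_eq)

lemma compact_Tbox: "compact Tbox"
  and lmeasurable_Tbox: "Tbox \<in> lmeasurable"
  and sets_lebesgue_Tbox: "Tbox \<in> sets lebesgue"
  by (simp_all add: Tbox_cbox)

lemma finite_measure_Tbox: "finite_measure (lebesgue_on Tbox)"
  by (rule finite_measure_lebesgue_on[OF lmeasurable_Tbox])

lemma frontier_Tbox: "frontier Tbox = {x \<in> Tbox. fst x \<in> {0, 2 * pi} \<or> snd x \<in> {0, 2 * pi}}"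
  unfolding Tbox_cbox frontier_cbox
  by (auto simp: mem_box cbox_Pair_eq Basis_prod_def inner_prod_def)

lemma integrable_continuous_on_Tbox:
  "continuous_on Tbox g \<Longrightarrow> integrable (lebesgue_on Tbox) g"
  for g :: "real \<times> real \<Rightarrow> real"
  unfolding Tbox_cbox by (rule continuous_imp_integrable)

lemma measurable_continuous_on_Tbox:
  "continuous_on Tbox g \<Longrightarrow> g \<in> borel_measurable (lebesgue_on Tbox)"
  for g :: "real \<times> real \<Rightarrow> real"
  by (rule continuous_imp_measurable_on_sets_lebesgue[OF _ sets_lebesgue_Tbox])

lemma has_integral_sin_period:
  fixes n :: int
  assumes "n \<noteq> 0"
  shows "((\<lambda>y. sin (c + of_int n * y)) has_integral 0) {0..2 * pi}"
proof -
  define F where "F y = - cos (c + of_int n * y) / of_int n" for y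
  have "((\<lambda>y. sin (c + of_int n * y)) has_integral (F (2 * pi) - F 0)) {0..2 * pi}"
  proof (rule fundamental_theorem_of_calculus)
    fix y :: real
    have "(F has_real_derivative sin (c + of_int n * y)) (at y within {0..2 * pi})"
      unfolding F_def using assms by (auto intro!: derivative_eq_intros)
    then show "(F has_vector_derivative sin (c + of_int n * y)) (at y within {0..2 * pi})"
      by (simp add: has_real_derivative_iff_has_vector_derivative)
  qed simp
  moreover have "cos (c + of_int n * (2 * pi)) = cos c"
    using cos_int_2pin[of n] sin_int_2pin[of n] by (simp add: cos_add mult.commute)
  ultimately show ?thesis by (simp add: F_def)
qed

lemma integral_sin_kdot_Tbox:
  assumes "k \<noteq> 0"
  shows "integral Tbox (\<lambda>x. sin (kdot k x + c)) = 0"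
proof -
  obtain a b where k: "k = (a, b)" by fastforce
  have "continuous_on Tbox (\<lambda>x. sin (kdot k x + c))"
    by (auto simp: kdot_def intro!: continuous_intros)
  then have "integral Tbox (\<lambda>x. sin (kdot k x + c))
      = integral {0..2 * pi} (\<lambda>x. integral {0..2 * pi} (\<lambda>y. sin ((c + a * x) + of_int b * y)))"
    unfolding Tbox_cbox by (subst integral_prod_continuous) (simp_all add: kdot_def k algebra_simps)
  also have "\<dots> = 0"
  proof (cases "b = 0")
    case True
    then have "a \<noteq> 0" using assms k by (simp add: zero_prod_def)
    then show ?thesis using True has_integral_sin_period[of a] by (simp add: integral_unique)
  next
    case False
    have "integral {0..2 * pi} (\<lambda>y. sin ((c + a * x) + of_int b * y)) = 0" for x :: real
      using has_integral_sin_period[OF False] by (rule integral_unique)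
    then show ?thesis by simp
  qed
  finally show ?thesis .
qed

lemma ebasis_eq_sin: "ebasis k x = sin (kdot k x + (if k \<in> Zplus then 0 else pi / 2))"
  by (simp add: ebasis_def sin_add)

lemma continuous_on_ebasis: "continuous_on S (ebasis k)"
  unfolding ebasis_eq_sin [abs_def] by (auto simp: kdot_def intro!: continuous_intros)

lemma integrable_ebasis: "integrable (lebesgue_on Tbox) (ebasis k)"
  by (rule integrable_continuous_on_Tbox[OF continuous_on_ebasis])

lemma integral_ebasis:
  assumes "k \<noteq> 0" shows "integral\<^sup>L (lebesgue_on Tbox) (ebasis k) = 0"
proof -
  have "integral\<^sup>L (lebesgue_on Tbox) (ebasis k) = integral Tbox (ebasis k)"
    by (rule lebesgue_integral_eq_integral[OF integrable_ebasis sets_lebesgue_Tbox])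
  also have "\<dots> = 0"
    unfolding ebasis_eq_sin [abs_def] by (rule integral_sin_kdot_Tbox[OF assms])
  finally show ?thesis .
qed

lemma integral_ebasis_sum:
  assumes "F \<subseteq> Zzero"
  shows "integrable (lebesgue_on Tbox) (\<lambda>x. \<Sum>k\<in>F. c k * ebasis k x)"
    and "integral\<^sup>L (lebesgue_on Tbox) (\<lambda>x. \<Sum>k\<in>F. c k * ebasis k x) = 0"
proof -
  show "integrable (lebesgue_on Tbox) (\<lambda>x. \<Sum>k\<in>F. c k * ebasis k x)"
    by (intro Bochner_Integration.integrable_sum integrable_mult_right integrable_ebasis)
  have "integral\<^sup>L (lebesgue_on Tbox) (\<lambda>x. \<Sum>k\<in>F. c k * ebasis k x)
      = (\<Sum>k\<in>F. c k * integral\<^sup>L (lebesgue_on Tbox) (ebasis k))"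
    by (subst Bochner_Integration.integral_sum) (auto simp: integrable_ebasis)
  also have "\<dots> = 0"
    using assms by (intro sum.neutral) (auto simp: integral_ebasis Zzero_iff)
  finally show "integral\<^sup>L (lebesgue_on Tbox) (\<lambda>x. \<Sum>k\<in>F. c k * ebasis k x) = 0" .
qed

section \<open>Stone-Weierstrass on the torus\<close>

lemma cos_sin_eq_period_interval:
  assumes "a \<in> {0..2 * pi}" "b \<in> {0..2 * pi}" "cos a = cos b" "sin a = sin b"
  shows "a = b \<or> a \<in> {0, 2 * pi} \<and> b \<in> {0, 2 * pi}"
proof -
  obtain n :: int where n: "a = b + 2 * pi * n" using sin_cos_eq_iff[of a b] assms(3,4) by auto
  have "\<bar>a - b\<bar> \<le> 2 * pi" using assms(1,2) by auto
  then have "\<bar>real_of_int n\<bar> * (2 * pi) \<le> 1 * (2 * pi)" using n by (simp add: abs_mult)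
  then have "\<bar>real_of_int n\<bar> \<le> 1" using pi_gt_zero by (simp only: mult_le_cancel_right_pos)
  then have "\<bar>n\<bar> \<le> 1" by linarith
  then have "n \<in> {-1, 0, 1}" by auto
  then show ?thesis using n assms(1,2) by auto
qed

definition torus_embedding :: "real \<times> real \<Rightarrow> real \<times> real \<times> real \<times> real" where
  "torus_embedding x = (cos (fst x), sin (fst x), cos (snd x), sin (snd x))"

lemma torus_embedding_eq_Tbox:
  assumes "x \<in> Tbox" "y \<in> Tbox" "torus_embedding x = torus_embedding y"
  shows "x = y \<or> x \<in> frontier Tbox \<and> y \<in> frontier Tbox"
proof -
  have "fst x \<in> {0..2 * pi}" "fst y \<in> {0..2 * pi}" "snd x \<in> {0..2 * pi}" "snd y \<in> {0..2 * pi}"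
    using assms(1,2) by (auto simp: Tbox_def)
  moreover have "cos (fst x) = cos (fst y)" "sin (fst x) = sin (fst y)"
    "cos (snd x) = cos (snd y)" "sin (snd x) = sin (snd y)"
    using assms(3) by (simp_all add: torus_embedding_def)
  ultimately have "fst x = fst y \<or> fst x \<in> {0, 2 * pi} \<and> fst y \<in> {0, 2 * pi}"
    "snd x = snd y \<or> snd x \<in> {0, 2 * pi} \<and> snd y \<in> {0, 2 * pi}"
    by (simp_all only: cos_sin_eq_period_interval)
  then show ?thesis using assms(1,2) by (auto simp: frontier_Tbox prod_eq_iff)
qed

lemma continuous_on_Tbox_factor_torus:
  fixes H :: "real \<times> real \<Rightarrow> real"
  assumes "continuous_on Tbox H" "\<forall>x \<in> frontier Tbox. H x = 0"
  obtains G where "continuous_on (torus_embedding ` Tbox) G"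
    "\<And>x. x \<in> Tbox \<Longrightarrow> G (torus_embedding x) = H x"
proof -
  let ?S = "torus_embedding ` Tbox"
  have cont: "continuous_on Tbox torus_embedding"
    unfolding torus_embedding_def by (intro continuous_intros)
  have q: "quotient_map (top_of_set Tbox) (top_of_set ?S) torus_embedding"
    unfolding quotient_map_def
  proof (intro conjI allI impI)
    fix U assume "U \<subseteq> topspace (top_of_set ?S)"
    then have "openin (top_of_set Tbox) (Tbox \<inter> torus_embedding -` U) = openin (top_of_set ?S) U"
      by (intro Abstract_Topology_2.continuous_imp_quotient_map[OF cont refl compact_Tbox]) simp
    moreover have "{x \<in> topspace (top_of_set Tbox). torus_embedding x \<in> U} = Tbox \<inter> torus_embedding -` U"
      by auto
    ultimately show "openin (top_of_set Tbox) {x \<in> topspace (top_of_set Tbox). torus_embedding x \<in> U}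
        = openin (top_of_set ?S) U" by simp
  qed simp
  have hc: "continuous_map (top_of_set Tbox) euclideanreal H" using assms(1) by simp
  have same: "H x = H y"
    if "x \<in> topspace (top_of_set Tbox)" "y \<in> topspace (top_of_set Tbox)"
      "torus_embedding x = torus_embedding y" for x y
    using torus_embedding_eq_Tbox[of x y] that assms(2) by auto
  obtain G where "continuous_map (top_of_set ?S) euclideanreal G"
    "\<And>x. x \<in> topspace (top_of_set Tbox) \<Longrightarrow> G (torus_embedding x) = H x"
  proof (rule quotient_map_lift_exists[OF q hc same])
    fix g assume "continuous_map (top_of_set ?S) euclideanreal g"
      "\<And>x. x \<in> topspace (top_of_set Tbox) \<Longrightarrow> g (torus_embedding x) = H x"
    then show thesis using that by blast
  qed
  then show ?thesis using that by simp
qed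

lemma trig_poly_uniform_approx:
  fixes H :: "real \<times> real \<Rightarrow> real"
  assumes "continuous_on Tbox H" "\<forall>x \<in> frontier Tbox. H x = 0" "e > 0"
  obtains t where "trig_poly t" "\<forall>x \<in> Tbox. \<bar>H x - t x\<bar> < e"
proof -
  let ?S = "torus_embedding ` Tbox"
  obtain G where G: "continuous_on ?S G" "\<And>x. x \<in> Tbox \<Longrightarrow> G (torus_embedding x) = H x"
    using continuous_on_Tbox_factor_torus[OF assms(1,2)] by blast
  define P where "P g \<longleftrightarrow> continuous_on ?S g \<and> trig_poly (g \<circ> torus_embedding)" for g
  have coords: "P fst" "P (fst \<circ> snd)" "P (fst \<circ> snd \<circ> snd)" "P (snd \<circ> snd \<circ> snd)"
    using trig_poly.cos_kdot[of "(1, 0)"] trig_poly.sin_kdot[of "(1, 0)"]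
      trig_poly.cos_kdot[of "(0, 1)"] trig_poly.sin_kdot[of "(0, 1)"]
    by (auto simp: P_def torus_embedding_def kdot_def o_def intro!: continuous_intros)
  have "compact ?S"
    by (intro compact_continuous_image compact_Tbox) (auto simp: torus_embedding_def intro!: continuous_intros)
  then have "\<exists>g. P g \<and> (\<forall>u \<in> ?S. \<bar>G u - g u\<bar> < e)"
  proof (rule Stone_Weierstrass_HOL[OF _ _ _ _ _ _ G(1) assms(3)])
    show "P (\<lambda>x. c)" for c by (simp add: P_def o_def trig_poly_const)
    show "P (\<lambda>x. f x + g x)" "P (\<lambda>x. f x * g x)" if "P f \<and> P g" for f g
      using that by (auto simp: P_def o_def intro!: continuous_on_add continuous_on_mult
          trig_poly.add trig_poly_mult)
    show "\<exists>f. P f \<and> f u \<noteq> f v" if "u \<in> ?S \<and> v \<in> ?S \<and> u \<noteq> v" for u v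
    proof -
      have "fst u \<noteq> fst v \<or> (fst \<circ> snd) u \<noteq> (fst \<circ> snd) v \<or> (fst \<circ> snd \<circ> snd) u \<noteq> (fst \<circ> snd \<circ> snd) v
          \<or> (snd \<circ> snd \<circ> snd) u \<noteq> (snd \<circ> snd \<circ> snd) v"
        using that by (auto simp: prod_eq_iff)
      then show ?thesis using coords by blast
    qed
  qed (simp add: P_def)
  then obtain g where "P g" "\<forall>u \<in> ?S. \<bar>G u - g u\<bar> < e" by blast
  then show ?thesis
    using that[of "g \<circ> torus_embedding"] G(2) by (auto simp: P_def)
qed

section \<open>Density in \<open>L\<^sup>2\<close>\<close>

lemma dominated_convergence_eventually_less:
  fixes u :: "nat \<Rightarrow> 'a \<Rightarrow> real"
  assumes "\<And>n. u n \<in> borel_measurable M" "integrable M w"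
    and "AE x in M. (\<lambda>n. u n x) \<longlonglongrightarrow> 0" "\<And>n. AE x in M. norm (u n x) \<le> w x"
    and "e > 0"
  shows "\<exists>n. integrable M (u n) \<and> integral\<^sup>L M (u n) < e"
proof -
  have "(\<lambda>n. integral\<^sup>L M (u n)) \<longlonglongrightarrow> integral\<^sup>L M (\<lambda>x. 0)"
    by (rule integral_dominated_convergence[OF borel_measurable_const assms(1-4)])
  then have "eventually (\<lambda>n. integral\<^sup>L M (u n) < e) sequentially"
    using assms(5) by (simp add: order_tendstoD(2))
  then obtain n where "integral\<^sup>L M (u n) < e" by (auto simp: eventually_sequentially)
  then show ?thesis
    using integrable_dominated_convergence2[OF borel_measurable_const assms(1-4)] by blast
qed

lemma integral_square_diff_le:
  fixes f g h :: "'a \<Rightarrow> real"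
  assumes "f \<in> borel_measurable M" "h \<in> borel_measurable M"
    and "integrable M (\<lambda>x. (f x - g x)\<^sup>2)" "integrable M (\<lambda>x. (g x - h x)\<^sup>2)"
  shows "integrable M (\<lambda>x. (f x - h x)\<^sup>2)"
    and "integral\<^sup>L M (\<lambda>x. (f x - h x)\<^sup>2)
      \<le> 2 * integral\<^sup>L M (\<lambda>x. (f x - g x)\<^sup>2) + 2 * integral\<^sup>L M (\<lambda>x. (g x - h x)\<^sup>2)"
proof -
  have le: "(f x - h x)\<^sup>2 \<le> 2 * (f x - g x)\<^sup>2 + 2 * (g x - h x)\<^sup>2" for x
    using zero_le_power2[of "(f x - g x) - (g x - h x)"] by (simp add: power2_eq_square algebra_simps)
  have bound: "integrable M (\<lambda>x. 2 * (f x - g x)\<^sup>2 + 2 * (g x - h x)\<^sup>2)"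
    using assms(3,4) by auto
  show int: "integrable M (\<lambda>x. (f x - h x)\<^sup>2)"
    using assms(1,2) le by (intro Bochner_Integration.integrable_bound[OF bound]) auto
  show "integral\<^sup>L M (\<lambda>x. (f x - h x)\<^sup>2)
      \<le> 2 * integral\<^sup>L M (\<lambda>x. (f x - g x)\<^sup>2) + 2 * integral\<^sup>L M (\<lambda>x. (g x - h x)\<^sup>2)"
    using integral_mono[OF int bound le] assms(3,4) by simp
qed

lemma integral_square_le_uniform:
  fixes u :: "'a \<Rightarrow> real"
  assumes "finite_measure M" "u \<in> borel_measurable M" "\<And>x. x \<in> space M \<Longrightarrow> \<bar>u x\<bar> \<le> \<delta>"
  shows "integrable M (\<lambda>x. (u x)\<^sup>2)" "integral\<^sup>L M (\<lambda>x. (u x)\<^sup>2) \<le> \<delta>\<^sup>2 * measure M (space M)"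
proof -
  interpret finite_measure M by fact
  have le: "(u x)\<^sup>2 \<le> \<delta>\<^sup>2" if "x \<in> space M" for x
    using power_mono[OF assms(3)[OF that] abs_ge_zero, of 2] by simp
  show int: "integrable M (\<lambda>x. (u x)\<^sup>2)"
    using le assms(2) by (intro integrable_const_bound[where B = "\<delta>\<^sup>2"] AE_I2) auto
  show "integral\<^sup>L M (\<lambda>x. (u x)\<^sup>2) \<le> \<delta>\<^sup>2 * measure M (space M)"
    using integral_mono[OF int integrable_const le] by (simp add: mult.commute)
qed

lemma integral_square_le_shift:
  fixes u :: "'a \<Rightarrow> real"
  assumes "finite_measure M" "integrable M u" "integrable M (\<lambda>x. (u x - c)\<^sup>2)" "integral\<^sup>L M u = 0"
  shows "integral\<^sup>L M (\<lambda>x. (u x)\<^sup>2) \<le> integral\<^sup>L M (\<lambda>x. (u x - c)\<^sup>2)"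
proof -
  interpret finite_measure M by fact
  have eq: "(u x - c)\<^sup>2 = (u x)\<^sup>2 + (c\<^sup>2 - 2 * c * u x)" for x
    by (simp add: power2_eq_square algebra_simps)
  have lin: "integrable M (\<lambda>x. c\<^sup>2 - 2 * c * u x)" using assms(2) by auto
  have "integrable M (\<lambda>x. (u x - c)\<^sup>2 - (c\<^sup>2 - 2 * c * u x))" using assms(3) lin by auto
  then have sq: "integrable M (\<lambda>x. (u x)\<^sup>2)" by (simp add: eq)
  have "integral\<^sup>L M (\<lambda>x. (u x - c)\<^sup>2) = integral\<^sup>L M (\<lambda>x. (u x)\<^sup>2) + integral\<^sup>L M (\<lambda>x. c\<^sup>2 - 2 * c * u x)"
    unfolding eq using sq lin by (rule Bochner_Integration.integral_add)
  also have "integral\<^sup>L M (\<lambda>x. c\<^sup>2 - 2 * c * u x) = c\<^sup>2 * measure M (space M)"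
    using assms(2,4) by (simp add: Bochner_Integration.integral_diff)
  finally show ?thesis by simp
qed

definition clip :: "real \<Rightarrow> real \<Rightarrow> real" where
  "clip B y = max (- B) (min B y)"

lemma continuous_on_clip: "continuous_on S (clip B)"
  unfolding clip_def by (intro continuous_intros)

lemma borel_measurable_clip [measurable]: "clip B \<in> borel_measurable borel"
  by (rule borel_measurable_continuous_onI[OF continuous_on_clip])

lemma abs_clip_le: "\<bar>clip B y\<bar> \<le> \<bar>B\<bar>"
  and clip_eq_self: "\<bar>y\<bar> \<le> B \<Longrightarrow> clip B y = y"
  and abs_diff_clip_le: "0 \<le> B \<Longrightarrow> \<bar>y - clip B y\<bar> \<le> \<bar>y\<bar>"
  by (auto simp: clip_def)

lemma L2_truncation_approx:
  assumes "L2 f" "e > 0"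
  obtains B where "integrable (lebesgue_on Tbox) (\<lambda>x. (f x - clip B (f x))\<^sup>2)"
    "integral\<^sup>L (lebesgue_on Tbox) (\<lambda>x. (f x - clip B (f x))\<^sup>2) < e"
proof -
  let ?M = "lebesgue_on Tbox"
  have f: "f \<in> borel_measurable ?M" "integrable ?M (\<lambda>x. (f x)\<^sup>2)"
    using assms(1) by (auto simp: L2_def)
  have meas: "(\<lambda>x. (f x - clip (real n) (f x))\<^sup>2) \<in> borel_measurable ?M" for n
    using f(1) by measurable
  have lim: "(\<lambda>n. (f x - clip (real n) (f x))\<^sup>2) \<longlonglongrightarrow> 0" for x
  proof (rule tendsto_eventually)
    obtain m :: nat where "\<bar>f x\<bar> \<le> real m" using real_arch_simple by blast
    have "(f x - clip (real n) (f x))\<^sup>2 = 0" if "m \<le> n" for n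
    proof -
      have "real m \<le> real n" using that by simp
      then have "\<bar>f x\<bar> \<le> real n" using \<open>\<bar>f x\<bar> \<le> real m\<close> by linarith
      then show ?thesis by (simp add: clip_eq_self)
    qed
    then show "eventually (\<lambda>n. (f x - clip (real n) (f x))\<^sup>2 = 0) sequentially"
      unfolding eventually_sequentially by blast
  qed
  have bound: "norm ((f x - clip (real n) (f x))\<^sup>2) \<le> (f x)\<^sup>2" for x n
    using abs_diff_clip_le[of "real n" "f x"] by (simp add: abs_le_square_iff)
  show ?thesis
    using dominated_convergence_eventually_less[OF meas f(2) AE_I2[OF lim] AE_I2[OF bound] assms(2)]
      that by blast
qed

definition Tbox_cutoff :: "nat \<Rightarrow> real \<times> real \<Rightarrow> real" where
  "Tbox_cutoff n x =
    max 0 (min 1 (real n * min (min (fst x) (2 * pi - fst x)) (min (snd x) (2 * pi - snd x))))"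

lemma continuous_on_Tbox_cutoff: "continuous_on S (Tbox_cutoff n)"
  unfolding Tbox_cutoff_def by (intro continuous_intros)

lemma Tbox_cutoff_bounds: "0 \<le> Tbox_cutoff n x" "Tbox_cutoff n x \<le> 1"
  by (auto simp: Tbox_cutoff_def)

lemma Tbox_cutoff_frontier: "x \<in> frontier Tbox \<Longrightarrow> Tbox_cutoff n x = 0"
  unfolding frontier_Tbox by (auto simp: Tbox_cutoff_def Tbox_def)

lemma Tbox_cutoff_tendsto:
  assumes "x \<in> Tbox - frontier Tbox"
  shows "(\<lambda>n. Tbox_cutoff n x) \<longlonglongrightarrow> 1"
proof (rule tendsto_eventually)
  define d where "d = min (min (fst x) (2 * pi - fst x)) (min (snd x) (2 * pi - snd x))"
  have "d > 0" using assms unfolding frontier_Tbox by (auto simp: d_def Tbox_def)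
  obtain m :: nat where "1 / d \<le> real m" using real_arch_simple by blast
  have "Tbox_cutoff n x = 1" if "m \<le> n" for n
  proof -
    have "1 \<le> real m * d" using \<open>1 / d \<le> real m\<close> \<open>d > 0\<close> by (simp add: field_simps)
    also have "\<dots> \<le> real n * d" using that \<open>d > 0\<close> by (simp add: mult_right_mono)
    finally have "1 \<le> real n * d" .
    then show ?thesis unfolding Tbox_cutoff_def d_def[symmetric] by (simp add: min_absorb1)
  qed
  then show "eventually (\<lambda>n. Tbox_cutoff n x = 1) sequentially"
    unfolding eventually_sequentially by blast
qed

lemma negligible_frontier_Tbox: "negligible (frontier Tbox)"
  unfolding Tbox_cbox frontier_cbox by (rule negligible_frontier_interval)

lemma AE_Tbox_interior_not_in:
  assumes "negligible N"
  shows "AE x in lebesgue_on Tbox. x \<in> Tbox - frontier Tbox - N"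
proof -
  have "negligible (N \<union> frontier Tbox)" using assms negligible_frontier_Tbox by (rule negligible_Un)
  then have "AE x in lebesgue. x \<notin> N \<union> frontier Tbox"
    by (intro AE_not_in) (simp add: negligible_iff_null_sets)
  then show ?thesis
    using sets_lebesgue_Tbox by (subst AE_restrict_space_iff) (auto elim: eventually_mono)
qed

lemma bounded_measurable_continuous_approx:
  fixes g :: "real \<times> real \<Rightarrow> real"
  assumes g: "g \<in> borel_measurable (lebesgue_on Tbox)" "\<And>x. \<bar>g x\<bar> \<le> B" and "e > 0"
  obtains H where "continuous_on UNIV H" "\<forall>x \<in> frontier Tbox. H x = 0"
    "integrable (lebesgue_on Tbox) (\<lambda>x. (g x - H x)\<^sup>2)"
    "integral\<^sup>L (lebesgue_on Tbox) (\<lambda>x. (g x - H x)\<^sup>2) < e"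
proof -
  let ?M = "lebesgue_on Tbox"
  have "g measurable_on Tbox"
    using g(1) measurable_on_iff_borel_measurable[OF sets_lebesgue_Tbox, of g] by simp
  then obtain N F where N: "negligible N" and F: "\<And>n. continuous_on UNIV (F n)"
    and F_lim: "\<And>x. x \<notin> N \<Longrightarrow> (\<lambda>n. F n x) \<longlonglongrightarrow> (if x \<in> Tbox then g x else 0)"
    unfolding measurable_on_def by blast
  define H where "H n x = clip B (F n x) * Tbox_cutoff n x" for n x
  have H_cont: "continuous_on UNIV (H n)" for n
    unfolding H_def
    by (intro continuous_intros continuous_on_compose2[OF continuous_on_clip F] continuous_on_Tbox_cutoff) auto
  have H_bound: "\<bar>H n x\<bar> \<le> \<bar>B\<bar>" for n x
    using abs_clip_le[of B "F n x"] Tbox_cutoff_bounds[of n x]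
    by (auto simp: H_def abs_mult intro: mult_le_one[THEN order_trans] mult_mono[of _ "\<bar>B\<bar>" _ 1, simplified])
  have "\<bar>g x - H n x\<bar> \<le> \<bar>2 * B\<bar>" for n x
    using g(2)[of x] H_bound[of n x] by linarith
  then have bound: "norm ((g x - H n x)\<^sup>2) \<le> (2 * B)\<^sup>2" for n x
    by (simp add: abs_le_square_iff)
  have lim: "AE x in ?M. (\<lambda>n. (g x - H n x)\<^sup>2) \<longlonglongrightarrow> 0"
    using AE_Tbox_interior_not_in[OF N]
  proof eventually_elim
    case (elim x)
    then have "(\<lambda>n. clip B (F n x)) \<longlonglongrightarrow> clip B (g x)"
      using F_lim[of x] unfolding clip_def by (auto intro!: tendsto_intros)
    moreover have "(\<lambda>n. Tbox_cutoff n x) \<longlonglongrightarrow> 1" using elim by (intro Tbox_cutoff_tendsto) simp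
    ultimately have "(\<lambda>n. H n x) \<longlonglongrightarrow> g x * 1"
      unfolding H_def clip_eq_self[OF g(2)] by (rule tendsto_mult)
    then have "(\<lambda>n. (g x - H n x)\<^sup>2) \<longlonglongrightarrow> (g x - g x * 1)\<^sup>2" by (intro tendsto_intros)
    then show ?case by simp
  qed
  have meas: "(\<lambda>x. (g x - H n x)\<^sup>2) \<in> borel_measurable ?M" for n
    using g(1) measurable_continuous_on_Tbox[OF continuous_on_subset[OF H_cont]] by measurable
  have "integrable ?M (\<lambda>x. (2 * B)\<^sup>2)"
    by (rule integrable_continuous_on_Tbox) (rule continuous_on_const)
  then obtain n where "integrable ?M (\<lambda>x. (g x - H n x)\<^sup>2)"
    "integral\<^sup>L ?M (\<lambda>x. (g x - H n x)\<^sup>2) < e"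
    using dominated_convergence_eventually_less[OF meas _ lim AE_I2[OF bound] \<open>e > 0\<close>] by blast
  moreover have "\<forall>x \<in> frontier Tbox. H n x = 0" by (simp add: H_def Tbox_cutoff_frontier)
  ultimately show ?thesis using that H_cont by blast
qed

lemma L2_trig_poly_approx:
  assumes "L2 f" "e > 0"
  obtains t where "trig_poly t" "integrable (lebesgue_on Tbox) (\<lambda>x. (f x - t x)\<^sup>2)"
    "integral\<^sup>L (lebesgue_on Tbox) (\<lambda>x. (f x - t x)\<^sup>2) < e"
proof -
  let ?M = "lebesgue_on Tbox"
  define A where "A = measure ?M (space ?M)"
  have "A \<ge> 0" by (simp add: A_def)
  have f: "f \<in> borel_measurable ?M" using assms(1) by (simp add: L2_def)
  \<comment> \<open>error budget: \<open>\<integral>(f - t)\<^sup>2 \<le> 2\<integral>(f - g)\<^sup>2 + 4\<integral>(g - H)\<^sup>2 + 4\<integral>(H - t)\<^sup>2\<close>, each integral at most \<open>e / 10\<close>\<close>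
  obtain B where fg: "integrable ?M (\<lambda>x. (f x - clip B (f x))\<^sup>2)"
    "integral\<^sup>L ?M (\<lambda>x. (f x - clip B (f x))\<^sup>2) < e / 10"
    using L2_truncation_approx[OF assms(1), of "e / 10"] assms(2) by auto
  define g where "g x = clip B (f x)" for x
  have g: "g \<in> borel_measurable ?M" using f unfolding g_def by measurable
  obtain H where H: "continuous_on UNIV H" "\<forall>x \<in> frontier Tbox. H x = 0"
    "integrable ?M (\<lambda>x. (g x - H x)\<^sup>2)" "integral\<^sup>L ?M (\<lambda>x. (g x - H x)\<^sup>2) < e / 10"
    using bounded_measurable_continuous_approx[OF g, of "\<bar>B\<bar>" "e / 10"] assms(2) abs_clip_le
    unfolding g_def by auto
  define \<delta> where "\<delta> = sqrt (e / (10 * (A + 1)))"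
  have "\<delta> > 0" using assms(2) \<open>A \<ge> 0\<close> by (simp add: \<delta>_def)
  obtain t where t: "trig_poly t" "\<forall>x \<in> Tbox. \<bar>H x - t x\<bar> < \<delta>"
    using trig_poly_uniform_approx[OF continuous_on_subset[OF H(1)] H(2) \<open>\<delta> > 0\<close>] by blast
  have t_meas: "t \<in> borel_measurable ?M"
    by (rule measurable_continuous_on_Tbox[OF continuous_on_trig_poly[OF t(1)]])
  have "(\<lambda>x. H x - t x) \<in> borel_measurable ?M"
    using measurable_continuous_on_Tbox[OF continuous_on_subset[OF H(1)]] t_meas by measurable
  then have Ht: "integrable ?M (\<lambda>x. (H x - t x)\<^sup>2)"
    "integral\<^sup>L ?M (\<lambda>x. (H x - t x)\<^sup>2) \<le> \<delta>\<^sup>2 * A"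
    using integral_square_le_uniform[OF finite_measure_Tbox, of "\<lambda>x. H x - t x" \<delta>] t(2)
    by (auto simp: A_def less_imp_le)
  have "\<delta>\<^sup>2 * A = e / 10 * (A / (A + 1))"
    using assms(2) \<open>A \<ge> 0\<close> by (simp add: \<delta>_def)
  also have "\<dots> \<le> e / 10" using assms(2) \<open>A \<ge> 0\<close> by (intro mult_left_le) auto
  finally have "integral\<^sup>L ?M (\<lambda>x. (H x - t x)\<^sup>2) \<le> e / 10" using Ht(2) by linarith
  then have gt: "integrable ?M (\<lambda>x. (g x - t x)\<^sup>2)"
    "integral\<^sup>L ?M (\<lambda>x. (g x - t x)\<^sup>2) < 4 * (e / 10)"
    using integral_square_diff_le[OF g t_meas H(3) Ht(1)] H(4) by auto
  then have "integrable ?M (\<lambda>x. (f x - t x)\<^sup>2)"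
    "integral\<^sup>L ?M (\<lambda>x. (f x - t x)\<^sup>2) < e"
    using integral_square_diff_le[OF f t_meas fg(1)[folded g_def] gt(1)] fg(2)[folded g_def] by auto
  then show ?thesis using that t(1) by blast
qed

lemma integrable_L2: "L2 f \<Longrightarrow> integrable (lebesgue_on Tbox) f"
  unfolding L2_def by (blast intro: finite_measure.square_integrable_imp_integrable[OF finite_measure_Tbox])

lemma closed_span_Zzero_iff: "closed_span Zzero f \<longleftrightarrow> L2 f"
proof
  let ?M = "lebesgue_on Tbox"
  assume f: "L2 f"
  show "closed_span Zzero f"
    unfolding closed_span_def
  proof (intro conjI allI impI f)
    fix e :: real assume "e > 0"
    then obtain t where t: "trig_poly t" "integrable ?M (\<lambda>x. (f x - t x)\<^sup>2)"
      "integral\<^sup>L ?M (\<lambda>x. (f x - t x)\<^sup>2) < e"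
      using L2_trig_poly_approx[OF f] by blast
    then obtain c0 F c where F: "finite F" "F \<subseteq> Zzero"
      and t_eq: "t = (\<lambda>x. c0 + (\<Sum>k\<in>F. c k * ebasis k x))"
      using trig_poly_imp_ebasis_poly unfolding ebasis_poly_def by blast
    define h where "h x = (\<Sum>k\<in>F. c k * ebasis k x)" for x
    have h: "integrable ?M h" "integral\<^sup>L ?M h = 0"
      unfolding h_def using integral_ebasis_sum[OF F(2)] by blast+
    have shift: "(\<lambda>x. (f x - h x - c0)\<^sup>2) = (\<lambda>x. (f x - t x)\<^sup>2)"
      by (simp add: t_eq h_def algebra_simps)
    have "integrable ?M (\<lambda>x. f x - h x)" "integral\<^sup>L ?M (\<lambda>x. f x - h x) = 0"
      using integrable_L2[OF f] h f by (simp_all add: L2_def Bochner_Integration.integral_diff)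
    then have "integral\<^sup>L ?M (\<lambda>x. (f x - h x)\<^sup>2) \<le> integral\<^sup>L ?M (\<lambda>x. (f x - t x)\<^sup>2)"
      using integral_square_le_shift[OF finite_measure_Tbox, of "\<lambda>x. f x - h x" c0] t(2)
      by (simp add: shift)
    also have "\<dots> < e" by (rule t(3))
    finally show "\<exists>F c. finite F \<and> F \<subseteq> Zzero \<and>
        integral\<^sup>L ?M (\<lambda>x. (f x - (\<Sum>k\<in>F. c k * ebasis k x))\<^sup>2) < e"
      using F unfolding h_def by blast
  qed
qed (simp add: closed_span_def)

theorem proposition3p3:
  fixes M K :: nat and Zs :: "(int \<times> int) set"
  assumes "finite Zs" and "Zs \<subseteq> Zzero"
    and "M > 2" and "K > 2" and "\<bar>int M - int K\<bar> > 2"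
    and "{(int M + 1, 0), (int M, 0), (0, int K + 1), (0, int K)} \<subseteq> Zset Zs 0"
  shows "S_inf Zs = {f. L2 f}"
proof -
  have "Zinf Zs = Zzero"
    using assms(3-6) by (intro Zinf_eq_Zzero[of "int M" "int K"]) auto
  then have "Zinf Zs \<union> Zs = Zzero" using assms(2) by blast
  then show ?thesis by (simp add: S_inf_def closed_span_Zzero_iff)
qed

end
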